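(* Let $G$ be an instance of the rank-maximal matchings problem (with last-resort posts added), let $M$ be a rank-maximal matching in $G$, and let $C$ be a directed cycle in the switching graph $G_M$. Then $w(C)=0$.
   Context: An instance is a bipartite graph $G=(\mathcal{A}\cup\mathcal{P},E)$, $\mathcal{A}$ a set of applicants, $\mathcal{P}$ a set of posts, with $E=E_1\cup\dots\cup E_r$ a disjoint union; $(a,p)\in E_i$ means $p$ is an $i$-th choice of $a$, written $\mathrm{rank}(a,p)=i$ (ties allowed). Each applicant $a$ is additionally given its own dummy last-resort post $\ell(a)$ with $(a,\ell(a))\in E_{r+1}$; the resulting instance with ranks $1,\dots,r+1$ is still called $G$. The signature of a matching $M$ is $(x_1,\dots,x_{r+1})$, $x_i$ the number of applicants matched along rank-$i$ edges; $M$ is rank-maximal if its signature is lexicographically maximum. Even/odd/unreachable: given a bipartite graph and a maximum matching $N$, a vertex is even (odd) if there is an even (odd) length $N$-alternating path from an $N$-unmatched vertex to it, unreachable otherwise; independent of the choice of $N$. Irving et al.'s algorithm: $G'_1=(\mathcal{A}\cup\mathcal{P},E_1)$, $M_1$ a maximum matching. For $i=1,\dots,r$: let $\mathcal{E}_i,\mathcal{O}_i,\mathcal{U}_i$ be the even/odd/unreachable vertices of $G'_i$; delete all edges of rank $>i$ incident to $\mathcal{O}_i\cup\mathcal{U}_i$; delete from $G'_i$ edges joining $\mathcal{O}_i$ to $\mathcal{O}_i\cup\mathcal{U}_i$; add the remaining edges of $E_{i+1}$ to get $G'_{i+1}$; let $M_{i+1}$ be a maximum matching of $G'_{i+1}$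 augmenting $M_i$. With $\mathcal{E}_{r+1},\mathcal{O}_{r+1},\mathcal{U}_{r+1}$ the even/odd/unreachable vertices of $G'_{r+1}$, the reduced graph $G'$ is $G'_{r+1}$ minus the edges joining $\mathcal{O}_{r+1}$ to $\mathcal{O}_{r+1}\cup\mathcal{U}_{r+1}$ (independent of choices). Switching graph: for a rank-maximal matching $M$ (which matches all applicants), $G_M$ is the directed graph on $\mathcal{P}$ with an edge $(p_i,p_j)$ whenever some applicant $a$ has $(a,p_i)\in M$ and $(a,p_j)\in E(G')$, with weight $w(p_i,p_j)=\mathrm{rank}(a,p_j)-\mathrm{rank}(a,p_i)$; the weight $w(C)$ of a cycle is the sum of its edge weights. *)

theory Defs
  imports Main
begin

definition is_matching :: "('a \<times> 'q) set \<Rightarrow> ('a \<times> 'q) set \<Rightarrow> bool" where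
  "is_matching F N \<longleftrightarrow> N \<subseteq> F \<and>
     (\<forall>a q a' q'. (a,q) \<in> N \<longrightarrow> (a',q') \<in> N \<longrightarrow> (a = a' \<longleftrightarrow> q = q'))"

definition is_max_matching :: "('a \<times> 'q) set \<Rightarrow> ('a \<times> 'q) set \<Rightarrow> bool" where
  "is_max_matching F N \<longleftrightarrow> is_matching F N \<and> (\<forall>N'. is_matching F N' \<longrightarrow> card N' \<le> card N)"

definition adj :: "('a \<times> 'q) set \<Rightarrow> ('a + 'q) \<Rightarrow> ('a + 'q) \<Rightarrow> bool" where
  "adj F u v \<longleftrightarrow> (\<exists>a q. (a,q) \<in> F \<and> ((u = Inl a \<and> v = Inr q) \<or> (u = Inr q \<and> v = Inl a)))"

definition matched :: "('a \<times> 'q) set \<Rightarrow> ('a + 'q) \<Rightarrow> bool" where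
  "matched N v \<longleftrightarrow> (\<exists>u. adj N v u)"

text \<open>An N-alternating path in the graph with edge set F, starting with a non-N edge
  (so that it may start at an N-unmatched vertex): the i-th edge (0-based) lies in N
  iff i is odd.\<close>
definition alt_path :: "('a \<times> 'q) set \<Rightarrow> ('a \<times> 'q) set \<Rightarrow> ('a + 'q) list \<Rightarrow> bool" where
  "alt_path F N vs \<longleftrightarrow> vs \<noteq> [] \<and> distinct vs \<and>
     (\<forall>i. Suc i < length vs \<longrightarrow>
        adj F (vs ! i) (vs ! Suc i) \<and> (adj N (vs ! i) (vs ! Suc i) \<longleftrightarrow> odd i))"

definition reach_parity :: "('a + 'q) set \<Rightarrow> ('a \<times> 'q) set \<Rightarrow> ('a \<times> 'q) set \<Rightarrow> bool \<Rightarrow> ('a + 'q) \<Rightarrow> bool" where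
  "reach_parity V F N ev v \<longleftrightarrow> v \<in> V \<and>
     (\<exists>vs. alt_path F N vs \<and> hd vs \<in> V \<and> \<not> matched N (hd vs) \<and> last vs = v
           \<and> (even (length vs - 1) \<longleftrightarrow> ev))"

text \<open>A chosen maximum matching (the classification does not depend on the choice).\<close>
definition mm :: "('a \<times> 'q) set \<Rightarrow> ('a \<times> 'q) set" where
  "mm F = (SOME N. is_max_matching F N)"

definition evens :: "('a + 'q) set \<Rightarrow> ('a \<times> 'q) set \<Rightarrow> ('a + 'q) set" where
  "evens V F = {v. reach_parity V F (mm F) True v}"

definition odds :: "('a + 'q) set \<Rightarrow> ('a \<times> 'q) set \<Rightarrow> ('a + 'q) set" where
  "odds V F = {v. reach_parity V F (mm F) False v}"

definition unreach :: "('a + 'q) set \<Rightarrow> ('a \<times> 'q) set \<Rightarrow> ('a + 'q) set" where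
  "unreach V F = V - evens V F - odds V F"

definition joins_OOU :: "('a + 'q) set \<Rightarrow> ('a + 'q) set \<Rightarrow> ('a \<times> 'q) \<Rightarrow> bool" where
  "joins_OOU Od U e \<longleftrightarrow> (Inl (fst e) \<in> Od \<and> Inr (snd e) \<in> Od \<union> U)
                     \<or> (Inr (snd e) \<in> Od \<and> Inl (fst e) \<in> Od \<union> U)"

definition incident :: "('a + 'q) set \<Rightarrow> ('a \<times> 'q) \<Rightarrow> bool" where
  "incident S e \<longleftrightarrow> Inl (fst e) \<in> S \<or> Inr (snd e) \<in> S"

text \<open>Original instance: applicants A, posts P, edges E \<subseteq> A \<times> P with ranks rk in {1..r}.
  Extended post type: Inl p is an original post p, Inr a is the last-resort post l(a).\<close>

definition ext_E :: "'a set \<Rightarrow> ('a \<times> 'p) set \<Rightarrow> ('a \<times> ('p + 'a)) set" where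
  "ext_E A E = {(a, Inl p) | a p. (a,p) \<in> E} \<union> {(a, Inr a) | a. a \<in> A}"

definition ext_posts :: "'a set \<Rightarrow> 'p set \<Rightarrow> ('p + 'a) set" where
  "ext_posts A P = Inl ` P \<union> Inr ` A"

definition ext_V :: "'a set \<Rightarrow> 'p set \<Rightarrow> ('a + ('p + 'a)) set" where
  "ext_V A P = Inl ` A \<union> Inr ` ext_posts A P"

definition ext_rank :: "nat \<Rightarrow> ('a \<Rightarrow> 'p \<Rightarrow> nat) \<Rightarrow> 'a \<Rightarrow> ('p + 'a) \<Rightarrow> nat" where
  "ext_rank r rk a q = (case q of Inl p \<Rightarrow> rk a p | Inr b \<Rightarrow> Suc r)"

definition rank_edges :: "'a set \<Rightarrow> ('a \<times> 'p) set \<Rightarrow> ('a \<Rightarrow> 'p \<Rightarrow> nat) \<Rightarrow> nat \<Rightarrow> nat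
     \<Rightarrow> ('a \<times> ('p + 'a)) set" where
  "rank_edges A E rk r i = {e \<in> ext_E A E. ext_rank r rk (fst e) (snd e) = i}"

text \<open>irving A P E rk r k = (edge set of G'_{k+1}, union of O_j \<union> U_j for j \<le> k).\<close>
primrec irving :: "'a set \<Rightarrow> 'p set \<Rightarrow> ('a \<times> 'p) set \<Rightarrow> ('a \<Rightarrow> 'p \<Rightarrow> nat) \<Rightarrow> nat \<Rightarrow> nat
     \<Rightarrow> ('a \<times> ('p + 'a)) set \<times> ('a + ('p + 'a)) set" where
  "irving A P E rk r 0 = (rank_edges A E rk r 1, {})"
| "irving A P E rk r (Suc k) =
     (let F = fst (irving A P E rk r k); D = snd (irving A P E rk r k);
          V = ext_V A P; Od = odds V F; U = unreach V F; D' = D \<union> Od \<union> U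
      in ({e \<in> F. \<not> joins_OOU Od U e} \<union> {e \<in> rank_edges A E rk r (k + 2). \<not> incident D' e}, D'))"

definition reduced :: "'a set \<Rightarrow> 'p set \<Rightarrow> ('a \<times> 'p) set \<Rightarrow> ('a \<Rightarrow> 'p \<Rightarrow> nat) \<Rightarrow> nat
     \<Rightarrow> ('a \<times> ('p + 'a)) set" where
  "reduced A P E rk r =
     (let F = fst (irving A P E rk r r); V = ext_V A P
      in {e \<in> F. \<not> joins_OOU (odds V F) (unreach V F) e})"

definition signature :: "nat \<Rightarrow> ('a \<Rightarrow> 'p \<Rightarrow> nat) \<Rightarrow> ('a \<times> ('p + 'a)) set \<Rightarrow> nat \<Rightarrow> nat" where
  "signature r rk M i = card {e \<in> M. ext_rank r rk (fst e) (snd e) = i}"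

definition lex_le :: "nat \<Rightarrow> (nat \<Rightarrow> nat) \<Rightarrow> (nat \<Rightarrow> nat) \<Rightarrow> bool" where
  "lex_le n f g \<longleftrightarrow> (\<forall>i\<in>{1..n}. f i = g i) \<or>
     (\<exists>i\<in>{1..n}. f i < g i \<and> (\<forall>j\<in>{1..<i}. f j = g j))"

definition rank_maximal :: "'a set \<Rightarrow> ('a \<times> 'p) set \<Rightarrow> ('a \<Rightarrow> 'p \<Rightarrow> nat) \<Rightarrow> nat
     \<Rightarrow> ('a \<times> ('p + 'a)) set \<Rightarrow> bool" where
  "rank_maximal A E rk r M \<longleftrightarrow> is_matching (ext_E A E) M \<and>
     (\<forall>N. is_matching (ext_E A E) N \<longrightarrow> lex_le (Suc r) (signature r rk N) (signature r rk M))"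

definition partner :: "('a \<times> 'q) set \<Rightarrow> 'q \<Rightarrow> 'a" where
  "partner M q = (THE a. (a, q) \<in> M)"

definition sw_edge :: "'a set \<Rightarrow> 'p set \<Rightarrow> ('a \<times> 'p) set \<Rightarrow> ('a \<Rightarrow> 'p \<Rightarrow> nat) \<Rightarrow> nat
     \<Rightarrow> ('a \<times> ('p + 'a)) set \<Rightarrow> ('p + 'a) \<Rightarrow> ('p + 'a) \<Rightarrow> bool" where
  "sw_edge A P E rk r M p q \<longleftrightarrow>
     p \<in> ext_posts A P \<and> q \<in> ext_posts A P \<and>
     (\<exists>a. (a, p) \<in> M \<and> (a, q) \<in> reduced A P E rk r)"

definition sw_weight :: "nat \<Rightarrow> ('a \<Rightarrow> 'p \<Rightarrow> nat) \<Rightarrow> ('a \<times> ('p + 'a)) set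
     \<Rightarrow> ('p + 'a) \<Rightarrow> ('p + 'a) \<Rightarrow> int" where
  "sw_weight r rk M p q =
     int (ext_rank r rk (partner M p) q) - int (ext_rank r rk (partner M p) p)"

definition sw_cycle :: "'a set \<Rightarrow> 'p set \<Rightarrow> ('a \<times> 'p) set \<Rightarrow> ('a \<Rightarrow> 'p \<Rightarrow> nat) \<Rightarrow> nat
     \<Rightarrow> ('a \<times> ('p + 'a)) set \<Rightarrow> ('p + 'a) list \<Rightarrow> bool" where
  "sw_cycle A P E rk r M cs \<longleftrightarrow> cs \<noteq> [] \<and> distinct cs \<and>
     (\<forall>j < length cs. sw_edge A P E rk r M (cs ! j) (cs ! ((j + 1) mod length cs)))"

definition cycle_weight :: "nat \<Rightarrow> ('a \<Rightarrow> 'p \<Rightarrow> nat) \<Rightarrow> ('a \<times> ('p + 'a)) set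
     \<Rightarrow> ('p + 'a) list \<Rightarrow> int" where
  "cycle_weight r rk M cs =
     (\<Sum>j < length cs. sw_weight r rk M (cs ! j) (cs ! ((j + 1) mod length cs)))"

end

theory Submission
  imports Defs
begin

text \<open>Switching M along the cycle C yields a matching M' of the reduced graph G' that covers the
  same vertices as M, and the rank sums of M' and M differ by w(C); so it suffices to show that M'
  has the same signature as M.

  A matching of a bipartite graph is maximum iff it covers every odd and every unreachable vertex
  and uses no edge between two of them. In G', an edge of rank at most i survives from G'_i without
  joining two odd/unreachable vertices of G'_i, and an edge of larger rank avoids those vertices
  altogether. Hence the edges of rank at most i of any matching of G' covering the odd and
  unreachable vertices of G'_i form a maximum matching of G'_i. For a rank-maximal M, induction over
  the phases shows that its edges of rank at most i form a maximum matching of G'_i, so M lies in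
  G' and covers all these vertices. Applied to M and M', this gives equally many edges of rank at
  most i for every i, hence equal signatures.\<close>

section \<open>Matchings and alternating paths\<close>

definition vset :: "('a \<times> 'q) \<Rightarrow> ('a + 'q) set" where
  "vset e = {Inl (fst e), Inr (snd e)}"

definition covered :: "('a \<times> 'q) set \<Rightarrow> ('a + 'q) set" where
  "covered N = \<Union> (vset ` N)"

definition matching :: "('a \<times> 'q) set \<Rightarrow> bool" where
  "matching N \<longleftrightarrow> (\<forall>e\<in>N. \<forall>e'\<in>N. vset e \<inter> vset e' \<noteq> {} \<longrightarrow> e = e')"

text \<open>Meaningful only for vertices on opposite sides.\<close>
definition edge_of :: "('a + 'q) \<Rightarrow> ('a + 'q) \<Rightarrow> 'a \<times> 'q" where
  "edge_of u v = (if isl u then (projl u, projr v) else (projl v, projr u))"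

lemma vset_inter_iff: "vset e \<inter> vset e' \<noteq> {} \<longleftrightarrow> fst e = fst e' \<or> snd e = snd e'"
  by (auto simp: vset_def)

lemma incident_iff_vset: "incident S e \<longleftrightarrow> vset e \<inter> S \<noteq> {}"
  by (auto simp: incident_def vset_def)

lemma is_matching_iff: "is_matching F N \<longleftrightarrow> N \<subseteq> F \<and> matching N"
proof
  assume "is_matching F N" then show "N \<subseteq> F \<and> matching N"
    unfolding is_matching_def matching_def vset_inter_iff by (clarsimp simp: prod_eq_iff)
next
  assume "N \<subseteq> F \<and> matching N" then show "is_matching F N"
    unfolding is_matching_def matching_def vset_inter_iff
    by clarsimp (metis fst_conv snd_conv prod.inject)
qed

lemma matching_subset: "matching N \<Longrightarrow> X \<subseteq> N \<Longrightarrow> matching X"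
  unfolding matching_def by blast

lemma matching_eqI: "matching N \<Longrightarrow> e \<in> N \<Longrightarrow> e' \<in> N \<Longrightarrow> v \<in> vset e \<Longrightarrow> v \<in> vset e' \<Longrightarrow> e = e'"
  unfolding matching_def by blast

lemma finite_covered: "finite N \<Longrightarrow> finite (covered N)"
  by (auto simp: covered_def vset_def)

lemma covered_mono: "X \<subseteq> Y \<Longrightarrow> covered X \<subseteq> covered Y"
  by (auto simp: covered_def)

lemma covered_Un: "covered (X \<union> Y) = covered X \<union> covered Y"
  by (auto simp: covered_def)

lemma covered_image: "covered ((\<lambda>j. (f j, g j)) ` I) = Inl ` f ` I \<union> Inr ` g ` I"
  by (auto simp: covered_def vset_def)

lemma adj_iff_edge_of: "adj N u v \<longleftrightarrow> isl u \<noteq> isl v \<and> edge_of u v \<in> N"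
  unfolding adj_def edge_of_def by (cases u; cases v) simp_all

lemma vset_edge_of: "isl u \<noteq> isl v \<Longrightarrow> vset (edge_of u v) = {u, v}"
  by (cases u; cases v) (auto simp: vset_def edge_of_def)

lemma adj_iff_vset: "adj N u v \<longleftrightarrow> (\<exists>e\<in>N. vset e = {u, v})"
  unfolding adj_def vset_def by (auto simp: doubleton_eq_iff) force+

lemma matched_iff_covered: "matched N v \<longleftrightarrow> v \<in> covered N"
  unfolding matched_def adj_iff_vset covered_def vset_def by auto

lemma adj_isl: "adj N u v \<Longrightarrow> isl u \<noteq> isl v"
  unfolding adj_def by auto

lemma adj_sym: "adj N u v \<Longrightarrow> adj N v u"
  unfolding adj_def by auto

lemma adj_mono: "adj N u v \<Longrightarrow> N \<subseteq> F \<Longrightarrow> adj F u v"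
  unfolding adj_def by auto

lemma matching_adj_unique:
  assumes "matching N" "adj N v u" "adj N v u'"
  shows "u = u'"
proof -
  obtain e e' where "e \<in> N" "vset e = {v, u}" "e' \<in> N" "vset e' = {v, u'}"
    using assms(2,3) by (auto simp: adj_iff_vset)
  moreover from calculation have "e = e'"
    using assms(1) by (intro matching_eqI[of N e e' v]) auto
  moreover have "u \<noteq> v" "u' \<noteq> v" using assms(2,3) adj_isl by blast+
  ultimately show ?thesis by (auto simp: doubleton_eq_iff)
qed

lemma alt_path_isl:
  assumes "alt_path F N vs" "i < length vs"
  shows "isl (vs!i) = (isl (vs!0) = even i)"
  using assms(2)
proof (induction i)
  case (Suc i)
  then have "isl (vs!i) \<noteq> isl (vs!Suc i)"
    using assms(1) adj_isl by (auto simp: alt_path_def)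
  with Suc show ?case by auto
qed simp

lemma alt_path_take: "alt_path F N vs \<Longrightarrow> 0 < n \<Longrightarrow> alt_path F N (take n vs)"
  unfolding alt_path_def by auto

lemma alt_path_snoc:
  assumes "alt_path F N vs" "adj F (last vs) w" "w \<notin> set vs"
    "adj N (last vs) w \<longleftrightarrow> odd (length vs - 1)"
  shows "alt_path F N (vs @ [w])"
  unfolding alt_path_def
proof (intro conjI allI impI)
  have ne: "vs \<noteq> []" using assms(1) by (simp add: alt_path_def)
  show "distinct (vs @ [w])" using assms(1,3) by (simp add: alt_path_def)
  fix i assume i: "Suc i < length (vs @ [w])"
  have "adj F ((vs @ [w]) ! i) ((vs @ [w]) ! Suc i) \<and>
        adj N ((vs @ [w]) ! i) ((vs @ [w]) ! Suc i) = odd i"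
  proof (cases "Suc i < length vs")
    case True
    then show ?thesis using assms(1) by (simp add: alt_path_def nth_append)
  next
    case False
    then have "i = length vs - 1" using i by simp
    then show ?thesis using assms(2,4) ne by (simp add: nth_append last_conv_nth)
  qed
  then show "adj F ((vs @ [w]) ! i) ((vs @ [w]) ! Suc i)"
    and "adj N ((vs @ [w]) ! i) ((vs @ [w]) ! Suc i) = odd i" by simp_all
qed simp

lemma reach_parityE:
  assumes "reach_parity V F N ev v"
  obtains vs where "alt_path F N vs" "hd vs \<in> V" "\<not> matched N (hd vs)" "last vs = v"
    "even (length vs - 1) \<longleftrightarrow> ev" "v \<in> V"
  using assms unfolding reach_parity_def by blast

lemma reach_parity_nth:
  assumes "alt_path F N vs" "hd vs \<in> V" "\<not> matched N (hd vs)" "k < length vs" "vs!k \<in> V"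
  shows "reach_parity V F N (even k) (vs!k)"
  unfolding reach_parity_def
proof (intro conjI exI)
  have ne: "vs \<noteq> []" using assms(4) by auto
  show "alt_path F N (take (Suc k) vs)" using assms(1) by (rule alt_path_take) simp
  show "hd (take (Suc k) vs) \<in> V" "\<not> matched N (hd (take (Suc k) vs))"
    using assms(2,3) ne by (simp_all add: hd_take)
  show "last (take (Suc k) vs) = vs ! k" using assms(4) by (simp add: take_Suc_conv_app_nth)
qed (use assms in simp_all)

lemma reach_parity_snoc:
  assumes "alt_path F N (vs @ [w])" "hd vs \<in> V" "\<not> matched N (hd vs)" "vs \<noteq> []" "w \<in> V"
  shows "reach_parity V F N (even (length vs)) w"
  using reach_parity_nth[OF assms(1), of V "length vs"] assms(2-5) by simp

locale augmenting_path =
  fixes F N :: "('a \<times> 'q) set" and vs :: "('a + 'q) list"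
  assumes finite_F: "finite F" and N_subset: "N \<subseteq> F" and matching_N: "matching N"
    and path: "alt_path F N vs"
    and hd_free: "\<not> matched N (hd vs)" and last_free: "\<not> matched N (last vs)"
    and even_length: "even (length vs)"
begin

definition path_edge :: "nat \<Rightarrow> 'a \<times> 'q" where
  "path_edge i = edge_of (vs!i) (vs!Suc i)"

definition path_edges :: "bool \<Rightarrow> ('a \<times> 'q) set" where
  "path_edges odd_pos = path_edge ` {i. Suc i < length vs \<and> (odd i \<longleftrightarrow> odd_pos)}"

definition augmented :: "('a \<times> 'q) set" where
  "augmented = (N - path_edges True) \<union> path_edges False"

lemma distinct_vs: "distinct vs"
  using path by (simp add: alt_path_def)

lemma
  assumes "Suc i < length vs"
  shows path_edge_in_F: "path_edge i \<in> F" and path_edge_in_N_iff: "path_edge i \<in> N \<longleftrightarrow> odd i"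
    and vset_path_edge: "vset (path_edge i) = {vs!i, vs!Suc i}"
proof -
  have "adj F (vs!i) (vs!Suc i)" and N: "adj N (vs!i) (vs!Suc i) \<longleftrightarrow> odd i"
    using path assms by (auto simp: alt_path_def)
  then show "path_edge i \<in> F" "vset (path_edge i) = {vs!i, vs!Suc i}"
    by (simp_all add: path_edge_def adj_iff_edge_of vset_edge_of)
  show "path_edge i \<in> N \<longleftrightarrow> odd i"
    using N \<open>adj F (vs!i) (vs!Suc i)\<close> by (simp add: path_edge_def adj_iff_edge_of)
qed

lemma nth_in_path_edge:
  assumes "Suc i < length vs" "j < length vs"
  shows "vs!j \<in> vset (path_edge i) \<longleftrightarrow> j = i \<or> j = Suc i"
  using assms vset_path_edge[OF assms(1)] distinct_vs by (auto simp: nth_eq_iff_index_eq)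

lemma inj_path_edge: "inj_on path_edge {i. Suc i < length vs}"
proof (rule inj_onI)
  fix i j assume i: "i \<in> {i. Suc i < length vs}" and j: "j \<in> {i. Suc i < length vs}"
    and eq: "path_edge i = path_edge j"
  have "vs!i \<in> vset (path_edge j)" using vset_path_edge[of i] i by (simp add: eq[symmetric])
  then have "i = j \<or> i = Suc j" using nth_in_path_edge[of j i] i j by simp
  moreover have "vs!j \<in> vset (path_edge i)" using vset_path_edge[of j] j by (simp add: eq)
  then have "j = i \<or> j = Suc i" using nth_in_path_edge[of i j] i j by simp
  ultimately show "i = j" by auto
qed

lemma card_path_edges: "card (path_edges False) = Suc (card (path_edges True))"
proof -
  have "{i. Suc i < length vs \<and> even i} = insert 0 (Suc ` {i. Suc i < length vs \<and> odd i})"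
  proof (intro set_eqI iffI)
    fix i assume "i \<in> {i. Suc i < length vs \<and> even i}"
    then show "i \<in> insert 0 (Suc ` {i. Suc i < length vs \<and> odd i})" by (cases i) auto
  next
    have "length vs \<ge> 2"
      using path even_length by (cases vs) (auto simp: alt_path_def, presburger)
    fix i assume "i \<in> insert 0 (Suc ` {i. Suc i < length vs \<and> odd i})"
    then show "i \<in> {i. Suc i < length vs \<and> even i}"
      using \<open>length vs \<ge> 2\<close> even_length by auto (metis Suc_lessI even_Suc)
  qed
  moreover have "finite {i. Suc i < length vs \<and> odd i}"
    by (rule finite_subset[of _ "{..<length vs}"]) auto
  ultimately have "card {i. Suc i < length vs \<and> even i} = Suc (card {i. Suc i < length vs \<and> odd i})"
    by (simp add: card_image)
  moreover have "card (path_edges b) = card {i. Suc i < length vs \<and> (odd i \<longleftrightarrow> b)}" for b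
    unfolding path_edges_def by (rule card_image, rule inj_on_subset[OF inj_path_edge]) auto
  ultimately show ?thesis by simp
qed

lemma card_augmented: "card augmented = Suc (card N)"
proof -
  have fin: "finite N" "finite (path_edges False)"
    using finite_F N_subset path_edge_in_F by (auto simp: path_edges_def intro: finite_subset)
  have "path_edges True \<subseteq> N" "path_edges False \<inter> N = {}"
    using path_edge_in_N_iff by (auto simp: path_edges_def)
  with fin have "card augmented = card N - card (path_edges True) + card (path_edges False)"
    unfolding augmented_def by (subst card_Un_disjoint) (auto simp: card_Diff_subset finite_subset)
  moreover have "card (path_edges True) \<le> card N"
    using fin \<open>path_edges True \<subseteq> N\<close> by (simp add: card_mono)
  ultimately show ?thesis using card_path_edges by simp
qed

lemma vset_off_path: "e \<in> N - path_edges True \<Longrightarrow> vset e \<inter> set vs = {}"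
proof (rule ccontr)
  assume e: "e \<in> N - path_edges True" and "vset e \<inter> set vs \<noteq> {}"
  then obtain j where j: "j < length vs" "vs!j \<in> vset e" by (auto simp: in_set_conv_nth)
  have "matched N (vs!j)" using e j by (auto simp: matched_iff_covered covered_def)
  moreover have "vs \<noteq> []" using j by auto
  ultimately have "j \<noteq> 0" "Suc j \<noteq> length vs"
    using hd_free last_free by (metis hd_conv_nth, metis last_conv_nth diff_Suc_1)
  obtain i where i: "Suc i < length vs" "odd i" "j = i \<or> j = Suc i"
  proof (cases "odd j")
    case True
    then show ?thesis using that[of j] j \<open>Suc j \<noteq> length vs\<close> by simp
  next
    case False
    then obtain i where "j = Suc i" using \<open>j \<noteq> 0\<close> by (cases j) auto
    then show ?thesis using that[of i] False j by simp
  qed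
  then have "path_edge i \<in> N" "vs!j \<in> vset (path_edge i)"
    using path_edge_in_N_iff vset_path_edge j by auto
  then have "e = path_edge i" using matching_N e j by (auto intro: matching_eqI)
  then show False using e i by (auto simp: path_edges_def)
qed

lemma matching_augmented: "matching augmented"
  unfolding matching_def
proof (intro ballI impI)
  fix e e' assume e: "e \<in> augmented" and e': "e' \<in> augmented" and meet: "vset e \<inter> vset e' \<noteq> {}"
  have path_vset: "vset f \<subseteq> set vs" if "f \<in> path_edges False" for f
    using that vset_path_edge by (auto simp: path_edges_def)
  consider "e \<in> path_edges False" "e' \<in> path_edges False"
    | "e \<in> N - path_edges True" "e' \<in> N - path_edges True"
    | "e \<in> path_edges False \<or> e' \<in> path_edges False"
      "e \<in> N - path_edges True \<or> e' \<in> N - path_edges True"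
    using e e' by (auto simp: augmented_def)
  then show "e = e'"
  proof cases
    case 1
    then obtain i j where ij: "Suc i < length vs" "even i" "e = path_edge i"
      "Suc j < length vs" "even j" "e' = path_edge j" by (auto simp: path_edges_def)
    then obtain k where "k < length vs" "vs!k \<in> vset e" "vs!k \<in> vset e'"
      using meet vset_path_edge by fastforce
    then have "(k = i \<or> k = Suc i) \<and> (k = j \<or> k = Suc j)"
      using nth_in_path_edge ij by simp
    then show ?thesis using ij by auto
  next
    case 2 then show ?thesis using matching_N meet by (auto simp: matching_def)
  next
    case 3 then show ?thesis using meet path_vset vset_off_path by blast
  qed
qed

end

theorem max_matching_no_augmenting_path:
  assumes "finite F" "is_max_matching F N" "alt_path F N vs"
    and "\<not> matched N (hd vs)" "\<not> matched N (last vs)"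
  shows "odd (length vs)"
proof (rule ccontr)
  assume "\<not> odd (length vs)"
  with assms interpret augmenting_path F N vs
    by unfold_locales (auto simp: is_max_matching_def is_matching_iff)
  have "is_matching F augmented"
    using matching_augmented N_subset path_edge_in_F
    by (auto simp: is_matching_iff augmented_def path_edges_def)
  then show False using card_augmented assms(2) by (auto simp: is_max_matching_def)
qed

section \<open>Even, odd and unreachable vertices\<close>

lemma reach_even_adj_reach_odd:
  assumes m: "matching N" and ru: "reach_parity V F N True u"
    and uv: "adj F u v" and vV: "v \<in> V"
  shows "reach_parity V F N False v"
proof -
  obtain vs where ap: "alt_path F N vs" and hV: "hd vs \<in> V" and hm: "\<not> matched N (hd vs)"
    and lu: "last vs = u" and ev: "even (length vs - 1)"
    using ru by (rule reach_parityE) blast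
  define L where "L = length vs"
  have ne: "vs \<noteq> []" using ap by (simp add: alt_path_def)
  have L0: "L > 0" using ne by (simp add: L_def)
  have uL: "vs ! (L - 1) = u" using lu ne by (simp add: last_conv_nth L_def)
  have isl_u: "isl u = isl (vs!0)" using alt_path_isl[OF ap, of "L-1"] uL ev L0 by (simp add: L_def)
  show ?thesis
  proof (cases "adj N u v")
    case True
    have "L \<noteq> 1"
    proof
      assume "L = 1" then have "hd vs = u" using uL ne by (simp add: hd_conv_nth)
      then show False using hm True by (auto simp: matched_def)
    qed
    then have L3: "L \<ge> 3" and o: "odd (L-2)" using L0 ev unfolding L_def by presburger+
    have "adj N (vs!(L-2)) (vs!Suc (L-2))"
      using ap L3 o by (simp add: alt_path_def L_def)
    then have "adj N (vs!(L-2)) u" using L3 uL by (simp add: Suc_diff_Suc numeral_2_eq_2)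
    then have "vs!(L-2) = v" using matching_adj_unique[OF m adj_sym True] by blast
    then show ?thesis using reach_parity_nth[OF ap hV hm, of "L-2"] L3 o vV by (simp add: L_def)
  next
    case False
    show ?thesis
    proof (cases "v \<in> set vs")
      case True
      then obtain k where k: "k < L" "vs!k = v" by (auto simp: in_set_conv_nth L_def)
      then have "isl v = (isl (vs!0) = even k)" using alt_path_isl[OF ap] by (auto simp: L_def)
      then have "odd k" using isl_u adj_isl[OF uv] by auto
      then show ?thesis using reach_parity_nth[OF ap hV hm, of k] k vV by (simp add: L_def)
    next
      case notin: False
      have "alt_path F N (vs @ [v])" using alt_path_snoc[OF ap] uv lu notin False ev by simp
      then have "reach_parity V F N (even L) v" unfolding L_def
        by (rule reach_parity_snoc[OF _ hV hm ne vV])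
      moreover have "odd L" using ev L0 unfolding L_def by presburger
      ultimately show ?thesis by simp
    qed
  qed
qed

lemma reach_odd_matched_reach_even:
  assumes m: "matching N" and NF: "N \<subseteq> F" and rv: "reach_parity V F N False v"
    and vw: "adj N v w" and wV: "w \<in> V"
  shows "reach_parity V F N True w"
proof -
  obtain vs where ap: "alt_path F N vs" and hV: "hd vs \<in> V" and hm: "\<not> matched N (hd vs)"
    and lv: "last vs = v" and od: "odd (length vs - 1)"
    using rv by (rule reach_parityE) blast
  define L where "L = length vs"
  have ne: "vs \<noteq> []" using ap by (simp add: alt_path_def)
  have L0: "L > 0" using ne by (simp add: L_def)
  have vL: "vs ! (L - 1) = v" using lv ne by (simp add: last_conv_nth L_def)
  have dist: "distinct vs" using ap by (simp add: alt_path_def)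
  have isl_v: "isl v \<noteq> isl (vs!0)" using alt_path_isl[OF ap, of "L-1"] vL od L0
    by (simp add: L_def)
  have notin: "w \<notin> set vs"
  proof
    assume "w \<in> set vs"
    then obtain k where k: "k < L" "vs!k = w" by (auto simp: in_set_conv_nth L_def)
    then have "isl w = (isl (vs!0) = even k)" using alt_path_isl[OF ap] by (auto simp: L_def)
    then have "even k" using isl_v adj_isl[OF vw] by auto
    have "k \<noteq> 0"
    proof
      assume "k = 0" then have "hd vs = w" using k ne by (simp add: hd_conv_nth)
      then show False using hm vw adj_sym by (auto simp: matched_def)
    qed
    then obtain j where j: "k = Suc j" by (cases k) auto
    have "adj N (vs!j) (vs!Suc j)" using ap \<open>even k\<close> k(1) j
      by (simp add: alt_path_def L_def)
    then have "adj N (vs!j) w" using j k by simp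
    then have "vs!j = v" using matching_adj_unique[OF m adj_sym adj_sym[OF vw]] by blast
    then have "j = L - 1" using vL nth_eq_iff_index_eq[OF dist, of j "L-1"] j k L0
      by (simp add: L_def)
    then show False using j k by simp
  qed
  have "adj F (last vs) w" using lv vw NF adj_mono by blast
  then have "alt_path F N (vs @ [w])" using alt_path_snoc[OF ap] notin lv vw od by simp
  then have "reach_parity V F N (even L) w" unfolding L_def
    by (rule reach_parity_snoc[OF _ hV hm ne wV])
  moreover have "even L" using od L0 unfolding L_def by presburger
  ultimately show ?thesis by simp
qed

lemma max_matching_reach_odd_matched:
  assumes "finite F" "is_max_matching F N" "reach_parity V F N False v"
  shows "matched N v"
proof (rule ccontr)
  assume "\<not> matched N v"
  obtain vs where "alt_path F N vs" "\<not> matched N (hd vs)" "last vs = v" "odd (length vs - 1)"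
    using assms(3) by (rule reach_parityE) blast
  moreover from calculation have "odd (length vs)"
    using max_matching_no_augmenting_path assms(1,2) \<open>\<not> matched N v\<close> by blast
  ultimately show False by (cases vs) auto
qed

lemma alt_path_join:
  assumes P: "alt_path F N P" and Q: "alt_path F N Q"
    and k: "k < length P" and m: "m < length Q" and meet: "P!k = Q!m"
    and parity: "even k \<noteq> even m" and first: "\<forall>j<m. Q!j \<notin> set P"
  shows "alt_path F N (take (Suc k) P @ rev (take m Q))"
    (is "alt_path F N ?R")
proof -
  have lenR: "length ?R = Suc k + m" using k m by simp
  have R1: "?R!j = P!j" if "j \<le> k" for j
    using that k by (simp add: nth_append)
  have R2: "?R!j = Q!(k+m-j)" if "k \<le> j" "j < Suc k + m" for j
  proof (cases "j = k")
    case False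
    then have "?R!j = rev (take m Q) ! (j - Suc k)" using that k by (simp add: nth_append)
    also have "\<dots> = Q!(k+m-j)" using that False m by (simp add: rev_nth add.commute)
    finally show ?thesis .
  qed (use R1 meet in simp)
  show ?thesis
    unfolding alt_path_def
  proof (intro conjI allI impI)
    have "set (take m Q) \<inter> set P = {}" using first m by (auto simp: in_set_conv_nth)
    then show "distinct ?R" using P Q set_take_subset[of "Suc k" P] by (auto simp: alt_path_def)
  next
    fix i assume i: "Suc i < length ?R"
    have "adj F (?R!i) (?R!Suc i) \<and> (adj N (?R!i) (?R!Suc i) \<longleftrightarrow> odd i)"
    proof (cases "Suc i \<le> k")
      case True
      then show ?thesis using R1[of i] R1[of "Suc i"] P k by (simp add: alt_path_def)
    next
      case False
      define t where "t = k + m - Suc i"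
      have t: "Suc t = k + m - i" "Suc t < length Q" "odd t = odd i"
        using False i lenR m parity unfolding t_def by auto
      have "?R!i = Q!(Suc t)" "?R!Suc i = Q!t"
        using R2[of i] R2[of "Suc i"] False i lenR t(1) by (simp_all add: t_def)
      then show ?thesis using Q t(2,3) adj_sym by (metis alt_path_def)
    qed
    then show "adj F (?R!i) (?R!Suc i)" "adj N (?R!i) (?R!Suc i) \<longleftrightarrow> odd i"
      by simp_all
  qed (use lenR in auto)
qed

lemma obtain_first_nth_in:
  assumes "i < length xs" "xs!i \<in> S"
  obtains m where "m < length xs" "xs!m \<in> S" "\<forall>j<m. xs!j \<notin> S"
proof -
  define m where "m = (LEAST m. m < length xs \<and> xs!m \<in> S)"
  have "m < length xs \<and> xs!m \<in> S"
    unfolding m_def by (rule LeastI[of _ i]) (use assms in simp)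
  moreover have "xs!j \<notin> S" if "j < m" for j
    using not_less_Least[of j "\<lambda>m. m < length xs \<and> xs!m \<in> S"] that calculation
    by (auto simp: m_def)
  ultimately show ?thesis using that by blast
qed

lemma max_matching_not_reach_even_and_odd:
  assumes fin: "finite F" and mx: "is_max_matching F N"
    and "reach_parity V F N True x" and "reach_parity V F N False x"
  shows False
proof -
  obtain P where P: "alt_path F N P" and hP: "\<not> matched N (hd P)"
    and lP: "last P = x" and eP: "even (length P - 1)"
    using assms(3) by (rule reach_parityE) blast
  obtain Q where Q: "alt_path F N Q" and hQ: "\<not> matched N (hd Q)"
    and lQ: "last Q = x" and oQ: "odd (length Q - 1)"
    using assms(4) by (rule reach_parityE) blast
  have neP: "P \<noteq> []" and neQ: "Q \<noteq> []" using P Q by (simp_all add: alt_path_def)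
  have isl_x: "isl x = isl (P!0)" "isl x \<noteq> isl (Q!0)"
    using alt_path_isl[OF P, of "length P - 1"] alt_path_isl[OF Q, of "length Q - 1"]
      lP lQ eP oQ neP neQ by (simp_all add: last_conv_nth)
  have "Q!(length Q - 1) \<in> set P" using lQ lP neQ neP by (metis last_conv_nth last_in_set)
  then obtain m where m: "m < length Q" "Q!m \<in> set P" and first: "\<forall>j<m. Q!j \<notin> set P"
    using obtain_first_nth_in[of "length Q - 1" Q "set P"] neQ by auto
  obtain k where k: "k < length P" "P!k = Q!m" using m(2) by (auto simp: in_set_conv_nth)
  have parity: "even k \<noteq> even m"
    using alt_path_isl[OF P k(1)] alt_path_isl[OF Q m(1)] k(2) isl_x by auto
  let ?R = "take (Suc k) P @ rev (take m Q)"
  have "odd (length ?R)"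
  proof (rule max_matching_no_augmenting_path[OF fin mx])
    show "alt_path F N ?R" using P Q k(1) m(1) k(2) parity first by (rule alt_path_join)
    show "\<not> matched N (hd ?R)" using hP neP by simp
    have "last ?R = Q!0"
    proof (cases m)
      case 0 then show ?thesis using k by (simp add: take_Suc_conv_app_nth)
    next
      case (Suc n) then show ?thesis using neQ
        by (simp add: last_append last_rev hd_take hd_conv_nth)
    qed
    then show "\<not> matched N (last ?R)" using hQ neQ by (simp add: hd_conv_nth)
  qed
  then show False using k m parity by simp
qed

section \<open>Maximum matchings and the even/odd/unreachable decomposition\<close>

text \<open>Odd vertices weigh 2 and unreachable ones 1. No edge joins two even vertices or an even and an
  unreachable one, so every edge weighs at least 2 and twice the size of any matching is at most the
  total weight; a maximum matching attains this bound exactly when it covers all odd and unreachable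
  vertices and uses no edge between two of them.\<close>

definition ou_weight :: "('a + 'q) set \<Rightarrow> ('a + 'q) set \<Rightarrow> ('a + 'q) \<Rightarrow> nat" where
  "ou_weight Od U v = (if v \<in> Od then 2 else if v \<in> U then 1 else 0)"

lemma edge_ou_weight_le_2_iff:
  "(\<Sum>v\<in>vset e. ou_weight Od U v) \<le> 2 \<longleftrightarrow> \<not> joins_OOU Od U e"
  by (auto simp: vset_def ou_weight_def joins_OOU_def)

lemma sum_covered_matching:
  assumes "matching X" "finite X"
  shows "(\<Sum>v\<in>covered X. f v) = (\<Sum>e\<in>X. \<Sum>v\<in>vset e. f v)"
  unfolding covered_def
proof (rule sum.UNION_disjoint)
  show "\<forall>e\<in>X. \<forall>e'\<in>X. e \<noteq> e' \<longrightarrow> vset e \<inter> vset e' = {}"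
    using assms(1) unfolding matching_def by blast
qed (use assms(2) in \<open>auto simp: vset_def\<close>)

lemma sum_ou_weight_le_covered:
  assumes "finite V" "finite W" "Od \<union> U \<subseteq> V" "Od \<union> U \<subseteq> W"
  shows "(\<Sum>v\<in>V. ou_weight Od U v) \<le> (\<Sum>v\<in>W. ou_weight Od U v)"
proof -
  have "(\<Sum>v\<in>V. ou_weight Od U v) = (\<Sum>v\<in>Od \<union> U. ou_weight Od U v)"
    using assms(1,3) by (intro sum.mono_neutral_right) (auto simp: ou_weight_def)
  also have "\<dots> \<le> (\<Sum>v\<in>W. ou_weight Od U v)"
    using assms(2,4) by (intro sum_mono2) auto
  finally show ?thesis .
qed

lemma sum_ou_weight_le_two_card:
  assumes "matching X" "finite X" "finite V" "Od \<union> U \<subseteq> V" "Od \<union> U \<subseteq> covered X"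
    and "\<forall>e\<in>X. \<not> joins_OOU Od U e"
  shows "(\<Sum>v\<in>V. ou_weight Od U v) \<le> 2 * card X"
proof -
  have "(\<Sum>v\<in>V. ou_weight Od U v) \<le> (\<Sum>v\<in>covered X. ou_weight Od U v)"
    using assms finite_covered by (intro sum_ou_weight_le_covered) auto
  also have "\<dots> = (\<Sum>e\<in>X. \<Sum>v\<in>vset e. ou_weight Od U v)"
    using assms(1,2) by (rule sum_covered_matching)
  also have "\<dots> \<le> (\<Sum>e\<in>X. 2)"
    using assms(6) edge_ou_weight_le_2_iff by (intro sum_mono) blast
  finally show ?thesis by simp
qed

lemma is_max_matching_mm: "finite F \<Longrightarrow> is_max_matching F (mm F)"
proof -
  assume "finite F"
  define S where "S = {N. is_matching F N}"
  have "finite S" unfolding S_def is_matching_def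
    by (rule finite_subset[of _ "Pow F"]) (use \<open>finite F\<close> in auto)
  moreover have "{} \<in> S" by (simp add: S_def is_matching_def)
  ultimately have "Max (card ` S) \<in> card ` S" by (intro Max_in) auto
  then obtain N where "N \<in> S" "card N = Max (card ` S)" by auto
  moreover have "\<forall>N'\<in>S. card N' \<le> Max (card ` S)" using \<open>finite S\<close>
    by simp
  ultimately have "\<forall>N'\<in>S. card N' \<le> card N" "N \<in> S" by simp_all
  then have "is_max_matching F N" by (auto simp: is_max_matching_def S_def)
  then show ?thesis unfolding mm_def by (rule someI)
qed

locale finite_bipartite =
  fixes V :: "('a + 'q) set" and F :: "('a \<times> 'q) set"
  assumes finite_V: "finite V" and finite_F: "finite F" and F_vertices: "\<And>e. e \<in> F \<Longrightarrow> vset e \<subseteq> V"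
begin

abbreviation "Od \<equiv> odds V F"
abbreviation "Ur \<equiv> unreach V F"
abbreviation "ou_total \<equiv> (\<Sum>v\<in>V. ou_weight Od Ur v)"

lemma odd_unreach_subset: "Od \<union> Ur \<subseteq> V"
  by (auto simp: odds_def unreach_def reach_parity_def)

lemma covered_subset_V: "X \<subseteq> F \<Longrightarrow> covered X \<subseteq> V"
  using F_vertices by (auto simp: covered_def)

lemma edge_ou_weight_ge_2:
  assumes "e \<in> F"
  shows "2 \<le> (\<Sum>v\<in>vset e. ou_weight Od Ur v)"
proof -
  obtain a q where e: "e = (a, q)" by (cases e)
  have V: "Inl a \<in> V" "Inr q \<in> V" using F_vertices[OF assms] e by (auto simp: vset_def)
  have ad: "adj F (Inl a) (Inr q)" using assms e by (auto simp: adj_def)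
  have m: "matching (mm F)" using is_max_matching_mm[OF finite_F]
    by (simp add: is_max_matching_def is_matching_iff)
  have "Inl a \<in> evens V F \<Longrightarrow> Inr q \<in> Od" "Inr q \<in> evens V F \<Longrightarrow> Inl a \<in> Od"
    using reach_even_adj_reach_odd[OF m _ ad V(2)]
      reach_even_adj_reach_odd[OF m _ adj_sym[OF ad] V(1)]
    by (simp_all add: evens_def odds_def)
  then show ?thesis using V e by (auto simp: vset_def ou_weight_def unreach_def)
qed

abbreviation "edge_weights X \<equiv> (\<Sum>e\<in>X. \<Sum>v\<in>vset e. ou_weight Od Ur v)"

lemma matching_edge_weights_bounds:
  assumes "is_matching F X"
  shows "2 * card X \<le> edge_weights X" and "edge_weights X = (\<Sum>v\<in>covered X. ou_weight Od Ur v)"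
    and "(\<Sum>v\<in>covered X. ou_weight Od Ur v) \<le> ou_total"
proof -
  have X: "X \<subseteq> F" "matching X" "finite X"
    using assms finite_F by (auto simp: is_matching_iff intro: finite_subset)
  have "(\<Sum>e\<in>X. 2) \<le> edge_weights X" using X edge_ou_weight_ge_2
    by (intro sum_mono) blast
  then show "2 * card X \<le> edge_weights X" by simp
  show "edge_weights X = (\<Sum>v\<in>covered X. ou_weight Od Ur v)"
    using X by (simp add: sum_covered_matching)
  show "(\<Sum>v\<in>covered X. ou_weight Od Ur v) \<le> ou_total"
    using covered_subset_V[OF X(1)] finite_V by (intro sum_mono2) auto
qed

lemma two_card_le_ou_total:
  assumes "is_matching F X"
  shows "2 * card X \<le> ou_total"
  using matching_edge_weights_bounds[OF assms] by linarith

lemma mm_covers_odd_unreach: "Od \<union> Ur \<subseteq> covered (mm F)"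
proof
  fix v assume v: "v \<in> Od \<union> Ur"
  show "v \<in> covered (mm F)"
  proof (cases "v \<in> Od")
    case True
    then show ?thesis
      using max_matching_reach_odd_matched[OF finite_F is_max_matching_mm[OF finite_F]]
      by (auto simp: odds_def matched_iff_covered)
  next
    case False
    then have "v \<in> Ur" using v by simp
    show ?thesis
    proof (rule ccontr)
      assume "v \<notin> covered (mm F)"
      then have "reach_parity V F (mm F) True v"
        unfolding reach_parity_def using \<open>v \<in> Ur\<close>
        by (intro conjI exI[of _ "[v]"]) (auto simp: alt_path_def matched_iff_covered unreach_def)
      then show False using \<open>v \<in> Ur\<close> by (simp add: unreach_def evens_def)
    qed
  qed
qed

lemma mm_no_joins_OOU: "e \<in> mm F \<Longrightarrow> \<not> joins_OOU Od Ur e"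
proof -
  assume e: "e \<in> mm F"
  have mx: "is_max_matching F (mm F)" by (rule is_max_matching_mm[OF finite_F])
  then have m: "matching (mm F)" "mm F \<subseteq> F"
    by (simp_all add: is_max_matching_def is_matching_iff)
  obtain a q where eq: "e = (a, q)" by (cases e)
  have ad: "adj (mm F) (Inl a) (Inr q)" using e eq by (auto simp: adj_def)
  have V: "Inl a \<in> V" "Inr q \<in> V" using F_vertices m(2) e eq by (auto simp: vset_def)
  have "Inl a \<in> Od \<Longrightarrow> Inr q \<in> evens V F" "Inr q \<in> Od \<Longrightarrow> Inl a \<in> evens V F"
    using reach_odd_matched_reach_even[OF m _ ad V(2)]
      reach_odd_matched_reach_even[OF m _ adj_sym[OF ad] V(1)]
    by (simp_all add: evens_def odds_def)
  moreover have "x \<in> evens V F \<Longrightarrow> x \<notin> Od" for x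
    using max_matching_not_reach_even_and_odd[OF finite_F mx] by (auto simp: evens_def odds_def)
  ultimately show ?thesis using eq by (auto simp: joins_OOU_def unreach_def)
qed

lemma two_card_max_matching: "is_max_matching F N \<Longrightarrow> 2 * card N = ou_total"
proof -
  assume mx: "is_max_matching F N"
  have "ou_total \<le> 2 * card (mm F)"
    using is_max_matching_mm[OF finite_F] finite_F mm_covers_odd_unreach mm_no_joins_OOU
    by (intro sum_ou_weight_le_two_card finite_V odd_unreach_subset)
      (auto simp: is_max_matching_def is_matching_iff intro: finite_subset)
  moreover have "card (mm F) \<le> card N"
    using mx is_max_matching_mm[OF finite_F] by (auto simp: is_max_matching_def)
  moreover have "2 * card N \<le> ou_total" using mx two_card_le_ou_total
    by (auto simp: is_max_matching_def)
  ultimately show ?thesis by linarith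
qed

lemma max_matching_covers_odd_unreach:
  assumes mx: "is_max_matching F N"
  shows "Od \<union> Ur \<subseteq> covered N"
proof
  have N: "is_matching F N" "finite N"
    using mx finite_F by (auto simp: is_max_matching_def is_matching_iff intro: finite_subset)
  fix v assume v: "v \<in> Od \<union> Ur"
  show "v \<in> covered N"
  proof (rule ccontr)
    assume "v \<notin> covered N"
    then have "(\<Sum>w\<in>covered N. ou_weight Od Ur w) < (\<Sum>w\<in>insert v (covered N). ou_weight Od Ur w)"
      using v finite_covered[OF N(2)] by (auto simp: ou_weight_def)
    also have "\<dots> \<le> ou_total"
      using v odd_unreach_subset covered_subset_V N(1) finite_V
      by (intro sum_mono2) (auto simp: is_matching_iff)
    finally show False
      using matching_edge_weights_bounds[OF N(1)] two_card_max_matching[OF mx] by linarith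
  qed
qed

lemma max_matching_no_joins_OOU:
  assumes mx: "is_max_matching F N" and e: "e \<in> N"
  shows "\<not> joins_OOU Od Ur e"
proof
  have N: "is_matching F N" "finite N"
    using mx finite_F by (auto simp: is_max_matching_def is_matching_iff intro: finite_subset)
  assume "joins_OOU Od Ur e"
  then have "2 < (\<Sum>v\<in>vset e. ou_weight Od Ur v)"
    using edge_ou_weight_le_2_iff[of Od Ur e] by simp
  then have "(\<Sum>e\<in>N. 2) < edge_weights N"
    using e N edge_ou_weight_ge_2 by (intro sum_strict_mono_ex1) (auto simp: is_matching_iff)
  then show False
    using matching_edge_weights_bounds[OF N(1)] two_card_max_matching[OF mx] by simp
qed

lemma max_matching_iff:
  "is_max_matching F N \<longleftrightarrow>
     is_matching F N \<and> Od \<union> Ur \<subseteq> covered N \<and> (\<forall>e\<in>N. \<not> joins_OOU Od Ur e)"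
proof
  assume "is_max_matching F N"
  then show "is_matching F N \<and> Od \<union> Ur \<subseteq> covered N \<and> (\<forall>e\<in>N. \<not> joins_OOU Od Ur e)"
    using max_matching_covers_odd_unreach max_matching_no_joins_OOU
    by (simp add: is_max_matching_def)
next
  assume N: "is_matching F N \<and> Od \<union> Ur \<subseteq> covered N \<and> (\<forall>e\<in>N. \<not> joins_OOU Od Ur e)"
  then have "ou_total \<le> 2 * card N"
    using finite_F by (intro sum_ou_weight_le_two_card finite_V odd_unreach_subset)
      (auto simp: is_matching_iff intro: finite_subset)
  then show "is_max_matching F N" using N two_card_le_ou_total
    by (fastforce simp: is_max_matching_def)
qed

end

section \<open>Rank prefixes of rank-maximal matchings\<close>

lemma matching_insert_half_free_edge:
  assumes m: "matching N" and fin: "finite N" and v: "v \<in> vset e" "v \<notin> covered N" and e: "e \<notin> N"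
  defines "N1 \<equiv> insert e {f\<in>N. vset f \<inter> vset e = {}}"
  shows "matching N1" "card N \<le> card N1"
proof -
  show "matching N1"
    using m unfolding matching_def N1_def by (auto simp: Int_commute)
  define R where "R = {f\<in>N. vset f \<inter> vset e \<noteq> {}}"
  have "card R \<le> 1"
  proof -
    have "f = g" if f: "f \<in> R" and g: "g \<in> R" for f g
    proof -
      obtain w w' where w: "w \<in> vset f" "w \<in> vset e" "w' \<in> vset g" "w' \<in> vset e"
        using f g by (auto simp: R_def)
      moreover have "w \<noteq> v" "w' \<noteq> v" using w f g v by (auto simp: covered_def R_def)
      ultimately have "w = w'" using v by (auto simp: vset_def)
      then show "f = g" using m f g w matching_eqI[of N f g w] by (auto simp: R_def)
    qed
    then show ?thesis using fin by (simp add: R_def card_le_Suc0_iff_eq)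
  qed
  moreover have "N1 = insert e (N - R)" by (auto simp: N1_def R_def)
  ultimately show "card N \<le> card N1"
    using fin e by (simp add: card_Diff_subset R_def)
qed

lemma larger_matching_covering:
  assumes finF: "finite F" and NF: "N \<subseteq> F" and m: "matching N"
  shows "N' \<subseteq> F \<Longrightarrow> matching N' \<Longrightarrow> card N < card N' \<Longrightarrow>
    \<exists>N''. N'' \<subseteq> F \<and> matching N'' \<and> card N < card N'' \<and> covered N \<subseteq> covered N''"
proof (induction "card (N - N')" arbitrary: N' rule: less_induct)
  case less
  show ?case
  proof (cases "covered N \<subseteq> covered N'")
    case False
    then obtain v where "v \<in> covered N" and v: "v \<notin> covered N'" by blast
    then obtain e where e: "e \<in> N" "v \<in> vset e" by (auto simp: covered_def)
    then have "e \<notin> N'" using v by (auto simp: covered_def)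
    define N1 where "N1 = insert e {f\<in>N'. vset f \<inter> vset e = {}}"
    have finN': "finite N'" using less.prems(1) finF finite_subset by blast
    have N1: "matching N1" "card N' \<le> card N1"
      using matching_insert_half_free_edge[OF less.prems(2) finN' e(2) v \<open>e \<notin> N'\<close>]
      by (simp_all add: N1_def)
    have "N - N1 \<subseteq> (N - N') - {e}"
      using m e(1) by (auto simp: N1_def dest: matching_eqI[of N _ e] simp: disjoint_iff)
    moreover have "finite N" using NF finF finite_subset by blast
    ultimately have "card (N - N1) \<le> card ((N - N') - {e})" by (intro card_mono) auto
    also have "\<dots> < card (N - N')"
      using e \<open>e \<notin> N'\<close> \<open>finite N\<close> by (intro psubset_card_mono) auto
    finally have "card (N - N1) < card (N - N')" .
    moreover have "N1 \<subseteq> F" using less.prems(1) e NF by (auto simp: N1_def)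
    ultimately show ?thesis using less.hyps N1 less.prems(3) by fastforce
  qed (use less.prems in blast)
qed

lemma not_lex_le_if_prefix_sums_less:
  fixes f g :: "nat \<Rightarrow> nat"
  assumes mn: "m \<le> n" and le: "\<forall>j\<le>m. (\<Sum>i\<in>{1..j}. g i) \<le> (\<Sum>i\<in>{1..j}. f i)"
    and lt: "(\<Sum>i\<in>{1..m}. g i) < (\<Sum>i\<in>{1..m}. f i)"
  shows "\<not> lex_le n f g"
proof -
  define D where "D = {i. 1 \<le> i \<and> i \<le> m \<and> f i \<noteq> g i}"
  have "D \<noteq> {}"
  proof
    assume "D = {}"
    then have "(\<Sum>i\<in>{1..m}. g i) = (\<Sum>i\<in>{1..m}. f i)"
      by (auto simp: D_def intro: sum.cong)
    then show False using lt by simp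
  qed
  define i0 where "i0 = (LEAST i. i \<in> D)"
  have i0: "i0 \<in> D" unfolding i0_def using \<open>D \<noteq> {}\<close>
    by (metis LeastI_ex ex_in_conv)
  then have i0_bounds: "1 \<le> i0" "i0 \<le> m" by (auto simp: D_def)
  have below: "f i = g i" if "1 \<le> i" "i < i0" for i
    using not_less_Least[of i "\<lambda>i. i \<in> D"] that i0 by (auto simp: i0_def D_def)
  have split: "(\<Sum>i\<in>{1..i0}. h i) = (\<Sum>i\<in>{1..i0-1}. h i) + h i0" for h :: "nat \<Rightarrow> nat"
  proof -
    have "{1..i0} = insert i0 {1..i0-1}" "i0 \<notin> {1..i0-1}" using i0_bounds by auto
    then show ?thesis by simp
  qed
  have "(\<Sum>i\<in>{1..i0-1}. g i) = (\<Sum>i\<in>{1..i0-1}. f i)"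
    using below by (intro sum.cong) auto
  moreover have "(\<Sum>i\<in>{1..i0}. g i) \<le> (\<Sum>i\<in>{1..i0}. f i)" using le i0_bounds
    by simp
  ultimately have "g i0 < f i0" using split[of g] split[of f] i0 by (auto simp: D_def)
  show ?thesis
    unfolding lex_le_def
  proof (intro notI, elim disjE)
    assume "\<forall>i\<in>{1..n}. f i = g i"
    then show False using \<open>g i0 < f i0\<close> i0_bounds mn by auto
  next
    assume "\<exists>i\<in>{1..n}. f i < g i \<and> (\<forall>j\<in>{1..<i}. f j = g j)"
    then obtain i where i: "1 \<le> i" "f i < g i" "\<forall>j\<in>{1..<i}. f j = g j" by auto
    have "\<not> i < i0" using below[of i] i by auto
    moreover have "i \<noteq> i0" using i \<open>g i0 < f i0\<close> by auto
    moreover have "\<not> i0 < i" using i(3) i0_bounds \<open>g i0 < f i0\<close> by auto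
    ultimately show False by linarith
  qed
qed

lemma card_le_eq_sum_card_eq:
  fixes rank :: "'e \<Rightarrow> nat"
  assumes "finite X" "\<forall>e\<in>X. rank e \<ge> 1"
  shows "card {e\<in>X. rank e \<le> j} = (\<Sum>i\<in>{1..j}. card {e\<in>X. rank e = i})"
proof (induction j)
  case 0
  have "{e\<in>X. rank e \<le> 0} = {}" using assms(2) by force
  then show ?case by (simp only: card.empty) simp
next
  case (Suc j)
  have "{e\<in>X. rank e \<le> Suc j} = {e\<in>X. rank e \<le> j} \<union> {e\<in>X. rank e = Suc j}" by auto
  then show ?case using Suc assms(1) by (simp add: card_Un_disjoint disjoint_iff)
qed

lemma sum_rank_eq_sum_card:
  fixes rank :: "'e \<Rightarrow> nat"
  assumes "finite X" "\<forall>e\<in>X. rank e \<in> {1..n}"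
  shows "(\<Sum>e\<in>X. rank e) = (\<Sum>i\<in>{1..n}. i * card {e\<in>X. rank e = i})"
proof -
  have "(\<Sum>e\<in>X. rank e) = (\<Sum>i\<in>{1..n}. \<Sum>e\<in>{e\<in>X. rank e = i}. rank e)"
    using assms by (intro sum.group[symmetric]) auto
  also have "\<dots> = (\<Sum>i\<in>{1..n}. i * card {e\<in>X. rank e = i})"
    by (intro sum.cong refl) simp
  finally show ?thesis .
qed

locale rank_instance =
  fixes A :: "'a set" and P :: "'p set" and E :: "('a \<times> 'p) set"
    and rk :: "'a \<Rightarrow> 'p \<Rightarrow> nat" and r :: nat
  assumes finite_A: "finite A" and finite_P: "finite P" and E_subset: "E \<subseteq> A \<times> P"
    and rk_bounds: "\<forall>(a, p) \<in> E. 1 \<le> rk a p \<and> rk a p \<le> r"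
begin

abbreviation "V \<equiv> ext_V A P"
abbreviation "edges \<equiv> ext_E A E"

definition rank :: "('a \<times> ('p + 'a)) \<Rightarrow> nat" where
  "rank e = ext_rank r rk (fst e) (snd e)"

definition rank_prefix :: "('a \<times> ('p + 'a)) set \<Rightarrow> nat \<Rightarrow> ('a \<times> ('p + 'a)) set" where
  "rank_prefix M i = {e\<in>M. rank e \<le> i}"

text \<open>G k is the graph G'_{k+1} of the algorithm and D k the set of vertices deleted before it.\<close>
abbreviation "G k \<equiv> fst (irving A P E rk r k)"
abbreviation "D k \<equiv> snd (irving A P E rk r k)"
abbreviation "Od k \<equiv> odds V (G k)"
abbreviation "Ur k \<equiv> unreach V (G k)"

lemma finite_V: "finite V"
  using finite_A finite_P by (simp add: ext_V_def ext_posts_def)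

lemma finite_edges: "finite edges"
proof -
  have "edges \<subseteq> A \<times> (Inl ` P \<union> Inr ` A)" using E_subset
    by (auto simp: ext_E_def)
  then show ?thesis using finite_A finite_P finite_subset by blast
qed

lemma vset_edge_subset_V: "e \<in> edges \<Longrightarrow> vset e \<subseteq> V"
  using E_subset by (auto simp: ext_E_def ext_V_def ext_posts_def vset_def)

lemma rank_edge_bounds: "e \<in> edges \<Longrightarrow> 1 \<le> rank e \<and> rank e \<le> Suc r"
  using rk_bounds by (auto simp: ext_E_def rank_def ext_rank_def)

lemma rank_edges_eq: "rank_edges A E rk r i = {e \<in> edges. rank e = i}"
  by (simp add: rank_edges_def rank_def)

lemma rank_prefix_0: "M \<subseteq> edges \<Longrightarrow> rank_prefix M 0 = {}"
  using rank_edge_bounds by (force simp: rank_prefix_def)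

lemma G_Suc: "G (Suc k) = {e \<in> G k. \<not> joins_OOU (Od k) (Ur k) e} \<union>
    {e \<in> rank_edges A E rk r (k + 2). \<not> incident (D k \<union> Od k \<union> Ur k) e}"
  by (simp add: Let_def)

lemma D_Suc: "D (Suc k) = D k \<union> Od k \<union> Ur k"
  by (simp add: Let_def)

lemma G_subset_edges: "G k \<subseteq> edges" and rank_G: "e \<in> G k \<Longrightarrow> rank e \<le> Suc k"
proof -
  have "G k \<subseteq> edges \<and> (\<forall>e\<in>G k. rank e \<le> Suc k)"
  proof (induction k)
    case (Suc k) then show ?case unfolding G_Suc by (auto simp: rank_edges_eq)
  qed (auto simp: rank_edges_eq)
  then show "G k \<subseteq> edges" "e \<in> G k \<Longrightarrow> rank e \<le> Suc k" by auto
qed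

lemma D_eq: "D k = (\<Union>j<k. Od j \<union> Ur j)"
proof (induction k)
  case (Suc k) then show ?case unfolding D_Suc by (auto simp: lessThan_Suc)
qed simp

lemma finite_bipartite_G: "finite_bipartite V (G k)"
proof
  show "finite (G k)" using finite_edges G_subset_edges by (rule finite_subset[rotated])
  show "vset e \<subseteq> V" if "e \<in> G k" for e using that G_subset_edges vset_edge_subset_V
    by blast
qed (rule finite_V)

lemma G_edge_levels:
  assumes "e \<in> G k" "j < k"
  shows "rank e \<le> Suc j \<Longrightarrow> e \<in> G j \<and> \<not> joins_OOU (Od j) (Ur j) e"
    and "Suc j < rank e \<Longrightarrow> \<not> incident (Od j \<union> Ur j) e"
proof -
  have "(rank e \<le> Suc j \<longrightarrow> e \<in> G j \<and> \<not> joins_OOU (Od j) (Ur j) e) \<and>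
        (Suc j < rank e \<longrightarrow> \<not> incident (Od j \<union> Ur j) e)"
    using assms
  proof (induction k arbitrary: e)
    case (Suc k)
    from Suc.prems(1) consider (old) "e \<in> G k" "\<not> joins_OOU (Od k) (Ur k) e"
      | (new) "e \<in> rank_edges A E rk r (k + 2)" "\<not> incident (D k \<union> Od k \<union> Ur k) e"
      unfolding G_Suc by blast
    then show ?case
    proof cases
      case old
      then show ?thesis using Suc.IH[of e] Suc.prems(2) rank_G[of e k] less_Suc_eq by fastforce
    next
      case new
      have "Od j \<union> Ur j \<subseteq> D k \<union> Od k \<union> Ur k"
        using D_eq[of k] Suc.prems(2) less_Suc_eq by auto
      then show ?thesis using new Suc.prems by (auto simp: incident_def rank_edges_eq)
    qed
  qed simp
  then show "rank e \<le> Suc j \<Longrightarrow> e \<in> G j \<and> \<not> joins_OOU (Od j) (Ur j) e"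
    and "Suc j < rank e \<Longrightarrow> \<not> incident (Od j \<union> Ur j) e" by auto
qed

lemma reduced_eq_G: "reduced A P E rk r = G (Suc r)"
proof -
  have "rank_edges A E rk r (r + 2) = {}" using rank_edge_bounds by (force simp: rank_edges_eq)
  then show ?thesis by (simp add: reduced_def Let_def)
qed

lemma reduced_subset_edges: "reduced A P E rk r \<subseteq> edges"
  unfolding reduced_eq_G by (rule G_subset_edges)

lemma rank_prefix_max_matching:
  assumes X: "X \<subseteq> G k" "matching X" and cov: "Od j \<union> Ur j \<subseteq> covered X" and j: "j < k"
  shows "is_max_matching (G j) (rank_prefix X (Suc j))"
  unfolding finite_bipartite.max_matching_iff[OF finite_bipartite_G]
proof (intro conjI)
  show "is_matching (G j) (rank_prefix X (Suc j))"
    using X G_edge_levels(1)[OF _ j] matching_subset[OF X(2)]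
    by (auto simp: is_matching_iff rank_prefix_def)
  show "\<forall>e\<in>rank_prefix X (Suc j). \<not> joins_OOU (Od j) (Ur j) e"
    using X G_edge_levels(1)[OF _ j] by (auto simp: rank_prefix_def)
  show "Od j \<union> Ur j \<subseteq> covered (rank_prefix X (Suc j))"
  proof
    fix w assume w: "w \<in> Od j \<union> Ur j"
    then obtain f where f: "f \<in> X" "w \<in> vset f" using cov by (auto simp: covered_def)
    have "\<not> incident (Od j \<union> Ur j) f" if "Suc j < rank f"
      using G_edge_levels(2)[OF _ j that] X(1) f by blast
    then have "\<not> Suc j < rank f" using f w by (auto simp: incident_iff_vset)
    then have "f \<in> rank_prefix X (Suc j)" using f by (simp add: rank_prefix_def)
    then show "w \<in> covered (rank_prefix X (Suc j))" using f by (auto simp: covered_def)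
  qed
qed

lemma signature_eq: "signature r rk X i = card {e \<in> X. rank e = i}"
  by (simp add: signature_def rank_def)

lemma not_lex_le_signature:
  assumes "X \<subseteq> edges" "Y \<subseteq> edges" "m \<le> Suc r"
    "\<forall>j\<le>m. card (rank_prefix Y j) \<le> card (rank_prefix X j)"
    "card (rank_prefix Y m) < card (rank_prefix X m)"
  shows "\<not> lex_le (Suc r) (signature r rk X) (signature r rk Y)"
proof -
  have "card (rank_prefix Z j) = (\<Sum>i\<in>{1..j}. signature r rk Z i)" if "Z \<subseteq> edges" for Z j
    unfolding rank_prefix_def signature_eq
    using that finite_edges rank_edge_bounds
    by (intro card_le_eq_sum_card_eq) (auto intro: finite_subset)
  then show ?thesis
    using assms by (intro not_lex_le_if_prefix_sums_less[OF assms(3)]) auto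
qed


lemma rank_prefix_subset_G:
  assumes M: "M \<subseteq> edges" "matching M"
    and below: "\<forall>j<k. is_max_matching (G j) (rank_prefix M (Suc j))"
  shows "rank_prefix M (Suc k) \<subseteq> G k"
proof
  have str: "rank_prefix M (Suc j) \<subseteq> G j \<and> Od j \<union> Ur j \<subseteq> covered (rank_prefix M (Suc j)) \<and>
      (\<forall>e\<in>rank_prefix M (Suc j). \<not> joins_OOU (Od j) (Ur j) e)" if "j < k" for j
    using below that finite_bipartite.max_matching_iff[OF finite_bipartite_G]
    by (auto simp: is_matching_iff)
  have low_rank: "rank f \<le> Suc j"
    if j: "j < k" and w: "w \<in> Od j \<union> Ur j" and f: "f \<in> M" "w \<in> vset f" for j w f
  proof -
    obtain g where g: "g \<in> rank_prefix M (Suc j)" "w \<in> vset g"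
      using str[OF j] w by (auto simp: covered_def)
    then have "f = g" using M(2) f matching_eqI[of M f g w] by (auto simp: rank_prefix_def)
    then show ?thesis using g by (simp add: rank_prefix_def)
  qed
  fix e assume "e \<in> rank_prefix M (Suc k)"
  then have e: "e \<in> M" "e \<in> edges" "rank e \<le> Suc k" using M(1)
    by (auto simp: rank_prefix_def)
  show "e \<in> G k"
  proof (cases k)
    case 0
    then show ?thesis using e rank_edge_bounds[of e] by (auto simp: rank_edges_eq)
  next
    case (Suc k')
    show ?thesis
    proof (cases "rank e \<le> Suc k'")
      case True
      then have "e \<in> rank_prefix M (Suc k')" using e by (simp add: rank_prefix_def)
      then have "e \<in> G k'" "\<not> joins_OOU (Od k') (Ur k') e" using str[of k'] Suc by blast+
      then show ?thesis unfolding Suc G_Suc by blast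
    next
      case False
      have "D k' \<union> Od k' \<union> Ur k' = (\<Union>j<Suc k'. Od j \<union> Ur j)"
        using D_eq[of "Suc k'"] D_Suc[of k'] by simp
      then have "\<not> incident (D k' \<union> Od k' \<union> Ur k') e"
        using low_rank[of _ _ e] e(1) Suc False by (auto simp: incident_iff_vset)
      then show ?thesis using e Suc False unfolding Suc G_Suc by (auto simp: rank_edges_eq)
    qed
  qed
qed

text \<open>If the prefix of M were not maximum in G'_{k+1}, a larger matching that keeps the lower
  prefixes maximum would have a lexicographically larger signature.\<close>
lemma rank_prefix_max_matching_step:
  assumes RM: "rank_maximal A E rk r M" and k: "k \<le> r"
    and below: "\<forall>j<k. is_max_matching (G j) (rank_prefix M (Suc j))"
    and sub: "rank_prefix M (Suc k) \<subseteq> G k"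
  shows "is_max_matching (G k) (rank_prefix M (Suc k))"
proof (rule ccontr)
  let ?Mk = "rank_prefix M (Suc k)"
  have M: "M \<subseteq> edges" "matching M" using RM
    by (auto simp: rank_maximal_def is_matching_iff)
  have Mk: "matching ?Mk" using matching_subset[OF M(2)] by (auto simp: rank_prefix_def)
  assume "\<not> is_max_matching (G k) ?Mk"
  moreover have "is_matching (G k) ?Mk" using sub Mk by (simp add: is_matching_iff)
  ultimately obtain N' where "is_matching (G k) N'" "card ?Mk < card N'"
    unfolding is_max_matching_def by (auto simp: not_le)
  then have N': "N' \<subseteq> G k" "matching N'" "card ?Mk < card N'"
    by (simp_all add: is_matching_iff)
  have "\<exists>N. N \<subseteq> G k \<and> matching N \<and> card ?Mk < card N \<and> covered ?Mk \<subseteq> covered N"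
    using finite_bipartite.finite_F[OF finite_bipartite_G] sub Mk N'
    by (rule larger_matching_covering)
  then obtain N where N: "N \<subseteq> G k" "matching N" "card ?Mk < card N" "covered ?Mk \<subseteq> covered N"
    by blast
  have N_edges: "N \<subseteq> edges" using N(1) G_subset_edges by blast
  have lower: "card (rank_prefix M (Suc j)) \<le> card (rank_prefix N (Suc j))" if j: "j < k" for j
  proof -
    have "Od j \<union> Ur j \<subseteq> covered (rank_prefix M (Suc j))"
      using below j finite_bipartite.max_matching_iff[OF finite_bipartite_G] by blast
    also have "\<dots> \<subseteq> covered ?Mk" using j
      by (intro covered_mono) (auto simp: rank_prefix_def)
    also have "\<dots> \<subseteq> covered N" by (rule N(4))
    finally have "is_max_matching (G j) (rank_prefix N (Suc j))"
      using rank_prefix_max_matching[OF N(1,2) _ j] by blast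
    then show ?thesis using below j by (auto simp: is_max_matching_def)
  qed
  have "rank_prefix N (Suc k) = N" using N(1) rank_G by (auto simp: rank_prefix_def)
  then have top: "card ?Mk < card (rank_prefix N (Suc k))" using N(3) by simp
  have "\<forall>j\<le>Suc k. card (rank_prefix M j) \<le> card (rank_prefix N j)"
  proof (intro allI impI)
    fix j assume "j \<le> Suc k"
    then consider "j = 0" | i where "j = Suc i" "i < k" | "j = Suc k"
      by (cases j) (auto simp: le_less)
    then show "card (rank_prefix M j) \<le> card (rank_prefix N j)"
      by cases (use rank_prefix_0 M(1) lower top in auto)
  qed
  then have "\<not> lex_le (Suc r) (signature r rk N) (signature r rk M)"
    using k top N_edges M(1) by (intro not_lex_le_signature) auto
  then show False using RM N(2) N_edges by (auto simp: rank_maximal_def is_matching_iff)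
qed

lemma rank_maximal_prefix_max_matching:
  assumes "rank_maximal A E rk r M"
  shows "k \<le> r \<Longrightarrow> is_max_matching (G k) (rank_prefix M (Suc k))"
proof (induction k rule: less_induct)
  case (less k)
  have M: "M \<subseteq> edges" "matching M" using assms
    by (auto simp: rank_maximal_def is_matching_iff)
  have "\<forall>j<k. is_max_matching (G j) (rank_prefix M (Suc j))" using less by simp
  then show ?case
    using rank_prefix_max_matching_step[OF assms less.prems] rank_prefix_subset_G[OF M] by blast
qed

lemma rank_maximal_covers_odd_unreach:
  assumes "rank_maximal A E rk r M" "k \<le> r"
  shows "Od k \<union> Ur k \<subseteq> covered M"
proof -
  have "Od k \<union> Ur k \<subseteq> covered (rank_prefix M (Suc k))"
    using rank_maximal_prefix_max_matching[OF assms]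
      finite_bipartite.max_matching_iff[OF finite_bipartite_G] by blast
  also have "\<dots> \<subseteq> covered M" by (rule covered_mono) (auto simp: rank_prefix_def)
  finally show ?thesis .
qed

lemma rank_maximal_subset_reduced:
  assumes "rank_maximal A E rk r M"
  shows "M \<subseteq> reduced A P E rk r"
proof -
  have "rank_prefix M (Suc r) = M"
    using assms rank_edge_bounds by (auto simp: rank_maximal_def is_matching_iff rank_prefix_def)
  then have "is_max_matching (G r) M" using rank_maximal_prefix_max_matching[OF assms] by force
  then show ?thesis unfolding reduced_eq_G G_Suc
    using finite_bipartite.max_matching_iff[OF finite_bipartite_G] by (auto simp: is_matching_iff)
qed

lemma card_rank_prefix_eq:
  assumes RM: "rank_maximal A E rk r M" and M': "M' \<subseteq> reduced A P E rk r" "matching M'"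
    and cov: "covered M \<subseteq> covered M'" and j: "j \<le> Suc r"
  shows "card (rank_prefix M' j) = card (rank_prefix M j)"
proof (cases j)
  case 0
  have "M \<subseteq> edges" "M' \<subseteq> edges"
    using RM M'(1) reduced_subset_edges by (auto simp: rank_maximal_def is_matching_iff)
  then show ?thesis using 0 by (simp add: rank_prefix_0)
next
  case (Suc i)
  have M: "M \<subseteq> G (Suc r)" "matching M"
    using rank_maximal_subset_reduced[OF RM] RM unfolding reduced_eq_G
    by (simp_all add: rank_maximal_def is_matching_iff)
  have i: "i < Suc r" using j Suc by simp
  have "Od i \<union> Ur i \<subseteq> covered M" using rank_maximal_covers_odd_unreach[OF RM] i
    by simp
  then have "is_max_matching (G i) (rank_prefix M (Suc i))"
    and "is_max_matching (G i) (rank_prefix M' (Suc i))"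
    using rank_prefix_max_matching[OF M _ i] rank_prefix_max_matching[OF _ M'(2) _ i] M' cov
    by (auto simp: reduced_eq_G)
  then show ?thesis using Suc by (auto simp: is_max_matching_def intro: le_antisym)
qed

lemma sum_rank_eq:
  assumes RM: "rank_maximal A E rk r M" and M': "M' \<subseteq> reduced A P E rk r" "matching M'"
    and cov: "covered M \<subseteq> covered M'"
  shows "(\<Sum>e\<in>M'. rank e) = (\<Sum>e\<in>M. rank e)"
proof -
  have sub: "M \<subseteq> edges" "M' \<subseteq> edges"
    using RM M'(1) reduced_subset_edges by (auto simp: rank_maximal_def is_matching_iff)
  then have fin: "finite M" "finite M'" using finite_edges finite_subset by blast+
  have split: "card (rank_prefix X (Suc i)) = card (rank_prefix X i) + card {e\<in>X. rank e = Suc i}"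
    if "finite X" for X i
  proof -
    have "rank_prefix X (Suc i) = rank_prefix X i \<union> {e\<in>X. rank e = Suc i}"
      by (auto simp: rank_prefix_def)
    then show ?thesis using that by (simp add: card_Un_disjoint rank_prefix_def disjoint_iff)
  qed
  have eq: "card {e\<in>M'. rank e = i} = card {e\<in>M. rank e = i}" if i: "i \<in> {1..Suc r}" for i
  proof -
    obtain j where j: "i = Suc j" "j \<le> r" using i by (cases i) auto
    then show ?thesis
      using split[OF fin(1), of j] split[OF fin(2), of j] card_rank_prefix_eq[OF RM M' cov, of j]
        card_rank_prefix_eq[OF RM M' cov, of "Suc j"] by simp
  qed
  have ranks: "\<forall>e\<in>X. rank e \<in> {1..Suc r}" if "X \<subseteq> edges" for X
    using that rank_edge_bounds by auto
  have "(\<Sum>e\<in>M'. rank e) = (\<Sum>i\<in>{1..Suc r}. i * card {e\<in>M'. rank e = i})"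
    using fin(2) ranks[OF sub(2)] by (rule sum_rank_eq_sum_card)
  also have "\<dots> = (\<Sum>i\<in>{1..Suc r}. i * card {e\<in>M. rank e = i})"
    using eq by (intro sum.cong) simp_all
  also have "\<dots> = (\<Sum>e\<in>M. rank e)"
    using fin(1) ranks[OF sub(1)] by (rule sum_rank_eq_sum_card[symmetric])
  finally show ?thesis .
qed

end

section \<open>Switching along a cycle\<close>

locale matching_cycle =
  fixes M :: "('a \<times> 'q) set" and cs :: "'q list" and a :: "nat \<Rightarrow> 'a"
  assumes matching_M: "matching M" and finite_M: "finite M"
    and distinct_cs: "distinct cs" and cs_ne: "cs \<noteq> []"
    and cycle_in_M: "\<And>j. j < length cs \<Longrightarrow> (a j, cs!j) \<in> M"
begin

definition next_idx :: "nat \<Rightarrow> nat" where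
  "next_idx j = Suc j mod length cs"

definition old_edges :: "('a \<times> 'q) set" where
  "old_edges = (\<lambda>j. (a j, cs!j)) ` {..<length cs}"

definition new_edges :: "('a \<times> 'q) set" where
  "new_edges = (\<lambda>j. (a j, cs!next_idx j)) ` {..<length cs}"

definition switched :: "('a \<times> 'q) set" where
  "switched = (M - old_edges) \<union> new_edges"

lemma next_idx_less: "next_idx j < length cs"
  using cs_ne by (simp add: next_idx_def)

lemma inj_next_idx: "inj_on next_idx {..<length cs}"
proof (rule inj_onI)
  have unfold: "next_idx i = (if Suc i = length cs then 0 else Suc i)" if "i < length cs" for i
    using that by (auto simp: next_idx_def)
  fix i j assume "i \<in> {..<length cs}" "j \<in> {..<length cs}" "next_idx i = next_idx j"
  then show "i = j" using unfold[of i] unfold[of j] by (auto split: if_splits)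
qed

lemma next_idx_image: "next_idx ` {..<length cs} = {..<length cs}"
  using inj_next_idx next_idx_less by (intro endo_inj_surj) auto

lemma nth_cs_eq_iff: "i < length cs \<Longrightarrow> j < length cs \<Longrightarrow> cs!i = cs!j \<longleftrightarrow> i = j"
  using distinct_cs by (simp add: nth_eq_iff_index_eq)

lemma cycle_applicant_eq_iff:
  assumes "i < length cs" "j < length cs"
  shows "a i = a j \<longleftrightarrow> i = j"
proof
  assume "a i = a j"
  then have "(a i, cs!i) = (a j, cs!j)"
    using matching_M cycle_in_M[OF assms(1)] cycle_in_M[OF assms(2)]
    unfolding matching_def vset_inter_iff by fastforce
  then show "i = j" using nth_cs_eq_iff[OF assms] by simp
qed simp

lemma new_edge_disjoint:
  assumes j: "j < length cs" and e: "e \<in> M - old_edges"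
  shows "vset (a j, cs!next_idx j) \<inter> vset e = {}"
proof -
  have "e \<noteq> (a j, cs!j)" "e \<noteq> (a (next_idx j), cs!next_idx j)"
    using e j next_idx_less by (auto simp: old_edges_def)
  moreover have "e \<in> M" using e by simp
  ultimately have "fst e \<noteq> a j" "snd e \<noteq> cs!next_idx j"
    using matching_eqI[OF matching_M _ cycle_in_M[OF j], of e "Inl (a j)"]
      matching_eqI[OF matching_M _ cycle_in_M[OF next_idx_less], of e "Inr (cs!next_idx j)"]
    by (auto simp: vset_def)
  then show ?thesis by (auto simp: vset_def)
qed

lemma matching_switched: "matching switched"
  unfolding matching_def
proof (intro ballI impI)
  fix e e' assume e: "e \<in> switched" and e': "e' \<in> switched" and meet: "vset e \<inter> vset e' \<noteq> {}"
  have new_new: "f = f'"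
    if f: "f \<in> new_edges" "f' \<in> new_edges" and fmeet: "vset f \<inter> vset f' \<noteq> {}" for f f'
  proof -
    obtain i j where "i < length cs" "j < length cs"
      "f = (a i, cs!next_idx i)" "f' = (a j, cs!next_idx j)"
      using f by (auto simp: new_edges_def)
    then show ?thesis
      using fmeet cycle_applicant_eq_iff nth_cs_eq_iff next_idx_less inj_next_idx
      by (auto simp: vset_inter_iff dest: inj_onD)
  qed
  have new_old: False
    if f: "f \<in> new_edges" "f' \<in> M - old_edges" and fmeet: "vset f \<inter> vset f' \<noteq> {}" for f f'
  proof -
    obtain j where "j < length cs" "f = (a j, cs!next_idx j)" using f(1)
      by (auto simp: new_edges_def)
    then show False using new_edge_disjoint[OF _ f(2)] fmeet by simp
  qed
  consider "e \<in> new_edges" "e' \<in> new_edges" | "e \<in> M - old_edges" "e' \<in> M - old_edges"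
    | "e \<in> new_edges" "e' \<in> M - old_edges" | "e \<in> M - old_edges" "e' \<in> new_edges"
    using e e' by (auto simp: switched_def)
  then show "e = e'"
  proof cases
    case 1 then show ?thesis using new_new meet by blast
  next
    case 2 then show ?thesis using matching_M meet unfolding matching_def by blast
  next
    case 3 then show ?thesis using new_old meet by blast
  next
    case 4 then show ?thesis using new_old meet by (metis Int_commute)
  qed
qed

lemma covered_switched: "covered switched = covered M"
proof -
  have "(\<lambda>j. cs!next_idx j) ` {..<length cs} = (\<lambda>j. cs!j) ` {..<length cs}"
    using next_idx_image by (metis image_image)
  then have "covered new_edges = covered old_edges"
    by (simp add: new_edges_def old_edges_def covered_image)
  moreover have "old_edges \<subseteq> M" using cycle_in_M by (auto simp: old_edges_def)
  ultimately show ?thesis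
    by (auto simp: switched_def covered_Un[symmetric] covered_def)
qed

lemma sum_switched:
  fixes f :: "'a \<times> 'q \<Rightarrow> 'b::comm_monoid_add"
  shows "(\<Sum>e\<in>switched. f e) + (\<Sum>j<length cs. f (a j, cs!j))
       = (\<Sum>e\<in>M. f e) + (\<Sum>j<length cs. f (a j, cs!next_idx j))"
proof -
  have "inj_on (\<lambda>j. (a j, cs!j)) {..<length cs}"
    using nth_cs_eq_iff by (auto intro: inj_onI)
  then have old: "(\<Sum>e\<in>old_edges. f e) = (\<Sum>j<length cs. f (a j, cs!j))"
    by (simp add: old_edges_def sum.reindex)
  have "inj_on (\<lambda>j. (a j, cs!next_idx j)) {..<length cs}"
    using nth_cs_eq_iff next_idx_less inj_next_idx by (auto intro!: inj_onI dest: inj_onD)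
  then have new: "(\<Sum>e\<in>new_edges. f e) = (\<Sum>j<length cs. f (a j, cs!next_idx j))"
    by (simp add: new_edges_def sum.reindex)
  have "new_edges \<inter> (M - old_edges) = {}"
    using new_edge_disjoint by (fastforce simp: new_edges_def vset_def)
  then have "(\<Sum>e\<in>switched. f e) = (\<Sum>e\<in>M - old_edges. f e) + (\<Sum>e\<in>new_edges. f e)"
    unfolding switched_def using finite_M by (intro sum.union_disjoint) (auto simp: new_edges_def)
  moreover have "(\<Sum>e\<in>M. f e) = (\<Sum>e\<in>M - old_edges. f e) + (\<Sum>e\<in>old_edges. f e)"
    using cycle_in_M finite_M by (intro sum.subset_diff) (auto simp: old_edges_def)
  ultimately show ?thesis using old new by (simp add: ac_simps)
qed

end

lemma partner_eq: "matching M \<Longrightarrow> (a, q) \<in> M \<Longrightarrow> partner M q = a"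
  unfolding partner_def
proof (rule the_equality)
  fix a' assume "matching M" "(a, q) \<in> M" "(a', q) \<in> M"
  then show "a' = a" unfolding matching_def vset_inter_iff by fastforce
qed

theorem lemma3:
  fixes A :: "'a set" and P :: "'p set" and E :: "('a \<times> 'p) set"
    and rk :: "'a \<Rightarrow> 'p \<Rightarrow> nat" and r :: nat
    and M :: "('a \<times> ('p + 'a)) set" and cs :: "('p + 'a) list"
  assumes "finite A" and "finite P" and "E \<subseteq> A \<times> P"
    and "\<forall>(a, p) \<in> E. 1 \<le> rk a p \<and> rk a p \<le> r"
    and "rank_maximal A E rk r M"
    and "sw_cycle A P E rk r M cs"
  shows "cycle_weight r rk M cs = 0"
proof -
  interpret rank_instance A P E rk r using assms(1-4) by unfold_locales
  have M: "matching M" "finite M" "M \<subseteq> reduced A P E rk r"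
    using assms(5) finite_edges rank_maximal_subset_reduced[OF assms(5)]
    by (auto simp: rank_maximal_def is_matching_iff intro: finite_subset)
  define a where "a j = partner M (cs!j)" for j
  have edge: "(a j, cs!j) \<in> M" "(a j, cs!(Suc j mod length cs)) \<in> reduced A P E rk r"
    if "j < length cs" for j
    using assms(6) that partner_eq[OF M(1)] by (auto simp: sw_cycle_def sw_edge_def a_def)
  interpret matching_cycle M cs a
    using M assms(6) edge(1) by unfold_locales (auto simp: sw_cycle_def)
  have "switched \<subseteq> reduced A P E rk r"
    using M(3) edge(2) by (auto simp: switched_def new_edges_def next_idx_def)
  then have "(\<Sum>e\<in>switched. rank e) = (\<Sum>e\<in>M. rank e)"
    using sum_rank_eq[OF assms(5) _ matching_switched] covered_switched by simp
  then have "(\<Sum>j<length cs. rank (a j, cs!next_idx j)) = (\<Sum>j<length cs. rank (a j, cs!j))"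
    using sum_switched[of rank] by simp
  then show ?thesis
    unfolding cycle_weight_def sw_weight_def
    by (simp add: a_def rank_def next_idx_def sum_subtractf flip: of_nat_sum)
qed

end
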